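(* Let $G=\sum_{i=1}^h C_{2m_i}+\sum_{j=1}^k C_{2n_j+1}$ (disjoint union of cycles), where $h,k\ge0$, $h+k\ge1$, $m_i\ge2$ and $n_j\ge1$, and let $p=|V(G)|$. Then $str(G)=\max\{p+2,\ p+1+k\}$.
   Context: $C_n$ denotes the cycle on $n$ vertices and $+$ disjoint union (an empty sum is omitted). For a graph $G$ of order $p$, a numbering is a bijection $f:V(G)\to[1,p]$; $str_f(G)=\max\{f(u)+f(v): uv\in E(G)\}$ and $str(G)=\min_f str_f(G)$. *)

theory Defs
  imports Main
begin

(* A graph is given by a vertex set V and a set E of (unordered) edges,
   each edge represented by an ordered pair (u,v) of endpoints. *)

definition numberings :: "'a set \<Rightarrow> ('a \<Rightarrow> nat) set" where
  "numberings V = {f. bij_betw f V {1..card V}}"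

definition str_f :: "('a \<times> 'a) set \<Rightarrow> ('a \<Rightarrow> nat) \<Rightarrow> nat" where
  "str_f E f = Max {f u + f v | u v. (u, v) \<in> E}"

definition str :: "'a set \<Rightarrow> ('a \<times> 'a) set \<Rightarrow> nat" where
  "str V E = Min (str_f E ` numberings V)"

(* Disjoint union of cycles C_{L!0} + C_{L!1} + ...: vertex (c,i) is the
   i-th vertex of the c-th cycle. *)
definition cyc_verts :: "nat list \<Rightarrow> (nat \<times> nat) set" where
  "cyc_verts L = {(c, i). c < length L \<and> i < L ! c}"

definition cyc_edges :: "nat list \<Rightarrow> ((nat \<times> nat) \<times> (nat \<times> nat)) set" where
  "cyc_edges L = {((c, i), (c, Suc i mod (L ! c))) | c i. c < length L \<and> i < L ! c}"

end

theory Submission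
  imports Defs
begin

(* Write p for the order and k for the number of odd cycles.  Every vertex of a cycle has two
   distinct neighbours, and one of them has label at least 2; applied to the vertex labelled p
   this gives p + 2.  If s = str_f(G), the vertices u with 2 f(u) \<ge> s form an independent set
   whose labels fill the interval from \<lceil>s/2\<rceil> to p; since C_l has independence number \<lfloor>l/2\<rfloor>
   and the floors sum to (p - k)/2, this forces s \<ge> p + 1 + k.  For the upper bound, list the
   even cycles before the odd ones and give the vertices in even positions the labels 1, 2, ...
   and those in odd positions the labels p, p - 1, ..., cycle after cycle: an edge inside cycle c
   then has label sum at most p + 2 plus the number of odd cycles before c, and the closing edge
   of an odd cycle joins two small labels. *)

lemma sum_list_map_conv_sum_nth: "(\<Sum>x\<leftarrow>xs. f x) = (\<Sum>i<length xs. f (xs ! i))"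
  by (simp add: sum_list_sum_nth atLeast0LessThan)

lemma sum_list_conv_sum_nth: "sum_list xs = (\<Sum>i<length xs. xs ! i)"
  using sum_list_map_conv_sum_nth[where f = "\<lambda>x. x"] by simp

lemma length_filter_odd_eq_sum_mod: "length (filter odd xs) = (\<Sum>x\<leftarrow>xs. x mod 2)"
  by (induction xs) (auto simp: odd_iff_mod_2_eq_one)

lemma sum_list_eq_halves: "sum_list xs = 2 * (\<Sum>x\<leftarrow>xs. x div 2) + length (filter odd xs)"
  by (induction xs) auto

section \<open>Bounds on the strength of a graph\<close>

lemma str_f_eq_Max_image: "str_f E f = Max ((\<lambda>(u, v). f u + f v) ` E)"
proof -
  have "{f u + f v | u v. (u, v) \<in> E} = (\<lambda>(u, v). f u + f v) ` E"
    by auto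
  then show ?thesis
    by (simp add: str_f_def)
qed

lemma str_f_ge:
  assumes "finite E" and "(u, v) \<in> E \<union> E\<inverse>"
  shows "f u + f v \<le> str_f E f"
proof -
  have "f u + f v \<in> (\<lambda>(u, v). f u + f v) ` E"
    using assms(2) by (force simp: add.commute)
  then show ?thesis
    using assms(1) by (simp add: str_f_eq_Max_image)
qed

lemma str_f_le_iff:
  assumes "finite E" and "E \<noteq> {}"
  shows "str_f E f \<le> s \<longleftrightarrow> (\<forall>(u, v) \<in> E. f u + f v \<le> s)"
  using assms by (auto simp: str_f_eq_Max_image)

lemma numberingsD:
  assumes "f \<in> numberings V"
  shows "inj_on f V" and "f ` V = {1..card V}"
  using assms by (auto simp: numberings_def bij_betw_def)

lemma str_eqI:
  assumes "finite E" and "E \<subseteq> V \<times> V" and "E \<noteq> {}"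
    and "g \<in> numberings V" and "str_f E g \<le> s"
    and "\<And>f. f \<in> numberings V \<Longrightarrow> s \<le> str_f E f"
  shows "str V E = s"
proof -
  have "str_f E f \<le> 2 * card V" if f: "f \<in> numberings V" for f
  proof -
    have "f u + f v \<le> 2 * card V" if "(u, v) \<in> E" for u v
    proof -
      have "u \<in> V" "v \<in> V"
        using assms(2) that by auto
      then have "f u \<le> card V" "f v \<le> card V"
        using numberingsD(2)[OF f] by auto
      then show ?thesis
        by linarith
    qed
    then show ?thesis
      by (auto simp: str_f_le_iff[OF assms(1,3)])
  qed
  then have "finite (str_f E ` numberings V)"
    by (auto intro: finite_subset[of _ "{..2 * card V}"])
  moreover have "s = str_f E g"
    using assms(4-6) by (simp add: le_antisym)
  ultimately show ?thesis
    unfolding str_def using assms(4,6) by (intro Min_eqI) auto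
qed

lemma str_f_ge_card_plus_2:
  assumes f: "f \<in> numberings V" and "finite E" and "E \<subseteq> V \<times> V" and "V \<noteq> {}"
    and two_neighbours:
      "\<And>v. v \<in> V \<Longrightarrow> \<exists>u w. u \<noteq> w \<and> (v, u) \<in> E \<union> E\<inverse> \<and> (v, w) \<in> E \<union> E\<inverse>"
  shows "card V + 2 \<le> str_f E f"
proof -
  have "card V \<in> f ` V"
    using numberingsD(2)[OF f] \<open>V \<noteq> {}\<close> by (cases "card V") auto
  then obtain v where v: "v \<in> V" "f v = card V"
    by auto
  obtain u w where uw: "u \<noteq> w" "(v, u) \<in> E \<union> E\<inverse>" "(v, w) \<in> E \<union> E\<inverse>"
    using two_neighbours[OF v(1)] by blast
  then have "u \<in> V" "w \<in> V"
    using assms(3) by auto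
  then have "f u \<noteq> f w" "1 \<le> f u" "1 \<le> f w"
    using numberingsD[OF f] \<open>u \<noteq> w\<close> by (auto simp: inj_on_def)
  then have "2 \<le> f u \<or> 2 \<le> f w"
    by linarith
  then show ?thesis
    using str_f_ge[OF assms(2) uw(2), where f = f] str_f_ge[OF assms(2) uw(3), where f = f] v(2)
    by linarith
qed

lemma card_high_labels:
  assumes f: "f \<in> numberings V" and "1 \<le> s"
  shows "card {v \<in> V. s \<le> 2 * f v} = Suc (card V) - (s + 1) div 2"
proof -
  have "f ` {v \<in> V. s \<le> 2 * f v} = {x \<in> f ` V. s \<le> 2 * x}"
    by auto
  also have "\<dots> = {(s + 1) div 2..card V}"
    using numberingsD(2)[OF f] assms(2) by auto
  finally have "card (f ` {v \<in> V. s \<le> 2 * f v}) = Suc (card V) - (s + 1) div 2"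
    by simp
  moreover have "inj_on f {v \<in> V. s \<le> 2 * f v}"
    using numberingsD(1)[OF f] by (rule inj_on_subset) auto
  ultimately show ?thesis
    by (simp add: card_image)
qed

lemma str_f_ge_independence:
  assumes f: "f \<in> numberings V" and "finite E" and "E \<subseteq> V \<times> V" and "E \<noteq> {}"
    and independent_card: "\<And>X. X \<subseteq> V \<Longrightarrow> E \<inter> X \<times> X \<subseteq> Id \<Longrightarrow> card X \<le> \<alpha>"
  shows "2 * (card V - \<alpha>) + 1 \<le> str_f E f"
proof -
  define s where "s = str_f E f"
  define X where "X = {v \<in> V. s \<le> 2 * f v}"
  have "E \<inter> X \<times> X \<subseteq> Id"
  proof clarify
    fix u v assume uv: "(u, v) \<in> E" "u \<in> X" "v \<in> X"
    then have "f u + f v \<le> s"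
      using str_f_ge[OF assms(2)] s_def by blast
    then have "f u = f v"
      using uv(2,3) by (simp add: X_def)
    then show "u = v"
      using numberingsD(1)[OF f] uv(2,3) by (auto simp: X_def inj_on_def)
  qed
  then have "card X \<le> \<alpha>"
    using independent_card by (auto simp: X_def)
  moreover have s_pos: "1 \<le> s"
  proof -
    obtain u v where uv: "(u, v) \<in> E"
      using assms(4) by auto
    then have "1 \<le> f u"
      using assms(3) numberingsD(2)[OF f] by fastforce
    moreover have "f u + f v \<le> s"
      using str_f_ge[OF assms(2), of u v f] uv s_def by blast
    ultimately show ?thesis
      by linarith
  qed
  ultimately have "Suc (card V) - (s + 1) div 2 \<le> \<alpha>"
    using card_high_labels[OF f] X_def by simp
  then show ?thesis
    using s_pos unfolding s_def[symmetric] by presburger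
qed

section \<open>Disjoint unions of cycles\<close>

lemma cyc_verts_eq_Sigma: "cyc_verts L = Sigma {..<length L} (\<lambda>c. {..<L ! c})"
  by (auto simp: cyc_verts_def)

lemma finite_cyc_verts: "finite (cyc_verts L)"
  by (simp add: cyc_verts_eq_Sigma)

lemma card_cyc_verts: "card (cyc_verts L) = sum_list L"
  by (simp add: cyc_verts_eq_Sigma sum_list_conv_sum_nth)

lemma cyc_edges_eq_image:
  "cyc_edges L = (\<lambda>(c, i). ((c, i), (c, Suc i mod L ! c))) ` cyc_verts L"
  by (auto simp: cyc_edges_def cyc_verts_def)

lemma finite_cyc_edges: "finite (cyc_edges L)"
  by (simp add: cyc_edges_eq_image finite_cyc_verts)

lemma cyc_edges_subset: "cyc_edges L \<subseteq> cyc_verts L \<times> cyc_verts L"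
  by (auto simp: cyc_edges_def cyc_verts_def)

lemma cyc_verts_ne:
  assumes "L \<noteq> []" and "\<forall>l \<in> set L. 1 \<le> l"
  shows "cyc_verts L \<noteq> {}"
proof -
  have "(0, 0) \<in> cyc_verts L"
    using assms by (cases L) (auto simp: cyc_verts_def)
  then show ?thesis
    by blast
qed

lemma cyc_vertex_two_neighbours:
  assumes "\<forall>l \<in> set L. 3 \<le> l" and "v \<in> cyc_verts L"
  shows "\<exists>u w. u \<noteq> w \<and> (v, u) \<in> cyc_edges L \<and> (w, v) \<in> cyc_edges L"
proof -
  obtain c i where v: "v = (c, i)" "c < length L" "i < L ! c"
    using assms(2) by (auto simp: cyc_verts_def)
  define l where "l = L ! c"
  have "3 \<le> l"
    using assms(1) v(2) by (simp add: l_def)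
  define j where "j = (if i = 0 then l - 1 else i - 1)"
  have "j < l" "Suc j mod l = i"
    using v(3) \<open>3 \<le> l\<close> by (auto simp: j_def l_def)
  then have "(v, (c, Suc i mod l)) \<in> cyc_edges L" "((c, j), v) \<in> cyc_edges L"
    using v by (auto simp: cyc_edges_def l_def)
  moreover have "Suc i mod l \<noteq> j"
    using v(3) \<open>3 \<le> l\<close> by (auto simp: j_def l_def mod_if)
  ultimately show ?thesis
    by blast
qed

lemma cycle_independent_card:
  assumes "2 \<le> l" and "X \<subseteq> {..<l}" and "\<And>i. i \<in> X \<Longrightarrow> Suc i mod l \<notin> X"
  shows "2 * card X \<le> l"
proof -
  have "inj_on (\<lambda>i. Suc i mod l) {..<l}"
    by (rule inj_onI) (auto simp: mod_if split: if_splits)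
  then have "card X = card ((\<lambda>i. Suc i mod l) ` X)"
    using assms(2) by (simp add: card_image inj_on_subset)
  also have "\<dots> \<le> card ({..<l} - X)"
    using assms by (intro card_mono) auto
  also have "\<dots> = l - card X"
    using assms(2) by (simp add: card_Diff_subset finite_subset)
  finally show ?thesis
    by linarith
qed

lemma independent_cyc_card:
  assumes "\<forall>l \<in> set L. 2 \<le> l" and "X \<subseteq> cyc_verts L" and "cyc_edges L \<inter> X \<times> X \<subseteq> Id"
  shows "card X \<le> (\<Sum>l\<leftarrow>L. l div 2)"
proof -
  define Y where "Y c = {i. (c, i) \<in> X}" for c
  have "X = Sigma {..<length L} Y"
    using assms(2) by (auto simp: Y_def cyc_verts_def)
  moreover have Y_sub: "Y c \<subseteq> {..<L ! c}" for c
    using assms(2) by (auto simp: Y_def cyc_verts_def)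
  then have "finite (Y c)" for c
    by (rule finite_subset) simp
  ultimately have "card X = (\<Sum>c<length L. card (Y c))"
    by simp
  also have "\<dots> \<le> (\<Sum>c<length L. L ! c div 2)"
  proof (rule sum_mono)
    fix c assume "c \<in> {..<length L}"
    then have c: "c < length L" by simp
    have "2 * card (Y c) \<le> L ! c"
    proof (rule cycle_independent_card[OF _ Y_sub])
      show "2 \<le> L ! c"
        using assms(1) c by simp
      fix i assume "i \<in> Y c"
      then have "((c, i), (c, Suc i mod L ! c)) \<in> cyc_edges L" "i < L ! c"
        using Y_sub c by (auto simp: cyc_edges_def)
      then show "Suc i mod L ! c \<notin> Y c"
        using assms(3) \<open>i \<in> Y c\<close> \<open>2 \<le> L ! c\<close> by (auto simp: Y_def mod_if split: if_splits)
    qed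
    then show "card (Y c) \<le> L ! c div 2"
      by linarith
  qed
  also have "\<dots> = (\<Sum>l\<leftarrow>L. l div 2)"
    by (simp add: sum_list_map_conv_sum_nth)
  finally show ?thesis .
qed

lemma str_f_cyc_lower_bound:
  assumes "L \<noteq> []" and "\<forall>l \<in> set L. 3 \<le> l" and f: "f \<in> numberings (cyc_verts L)"
  shows "max (sum_list L + 2) (sum_list L + 1 + length (filter odd L)) \<le> str_f (cyc_edges L) f"
proof -
  have verts_ne: "cyc_verts L \<noteq> {}"
    using assms(1,2) cyc_verts_ne by fastforce
  then have edges_ne: "cyc_edges L \<noteq> {}"
    by (simp add: cyc_edges_eq_image)
  have "card (cyc_verts L) + 2 \<le> str_f (cyc_edges L) f"
    using cyc_vertex_two_neighbours[OF assms(2)]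
    by (intro str_f_ge_card_plus_2[OF f finite_cyc_edges cyc_edges_subset verts_ne]) blast
  moreover have "2 * (card (cyc_verts L) - (\<Sum>l\<leftarrow>L. l div 2)) + 1 \<le> str_f (cyc_edges L) f"
    using independent_cyc_card assms(2)
    by (intro str_f_ge_independence[OF f finite_cyc_edges cyc_edges_subset edges_ne]) fastforce
  ultimately show ?thesis
    using sum_list_eq_halves[of L] by (simp add: card_cyc_verts)
qed

section \<open>The alternating numbering\<close>

lemma prefix_sum_add_le:
  fixes w :: "nat \<Rightarrow> nat"
  assumes "c < c'"
  shows "(\<Sum>d<c. w d) + w c \<le> (\<Sum>d<c'. w d)"
proof -
  have "(\<Sum>d<Suc c. w d) \<le> (\<Sum>d<c'. w d)"
    using assms by (intro sum_mono2) auto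
  then show ?thesis
    by simp
qed

lemma prefix_sum_add_inj:
  fixes w :: "nat \<Rightarrow> nat"
  assumes "(\<Sum>d<c. w d) + x = (\<Sum>d<c'. w d) + x'" and "x < w c" and "x' < w c'"
  shows "c = c' \<and> x = x'"
proof (cases c c' rule: linorder_cases)
  case less
  then show ?thesis
    using prefix_sum_add_le[OF less, of w] assms by linarith
next
  case greater
  then show ?thesis
    using prefix_sum_add_le[OF greater, of w] assms by linarith
qed (use assms in simp)

definition even_positions_before :: "nat list \<Rightarrow> nat \<Rightarrow> nat" where
  "even_positions_before L c = (\<Sum>d<c. (L ! d + 1) div 2)"

definition odd_positions_before :: "nat list \<Rightarrow> nat \<Rightarrow> nat" where
  "odd_positions_before L c = (\<Sum>d<c. L ! d div 2)"

definition odd_cycles_before :: "nat list \<Rightarrow> nat \<Rightarrow> nat" where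
  "odd_cycles_before L c = (\<Sum>d<c. L ! d mod 2)"

lemma even_positions_before_eq: "even_positions_before L c = odd_positions_before L c + odd_cycles_before L c"
proof -
  have "even_positions_before L c = (\<Sum>d<c. L ! d div 2 + L ! d mod 2)"
    unfolding even_positions_before_def by (intro sum.cong refl) presburger
  then show ?thesis
    by (simp add: sum.distrib odd_positions_before_def odd_cycles_before_def)
qed

lemma even_plus_odd_positions: "even_positions_before L (length L) + odd_positions_before L (length L) = sum_list L"
proof -
  have "even_positions_before L (length L) + odd_positions_before L (length L)
      = (\<Sum>d<length L. (L ! d + 1) div 2 + L ! d div 2)"
    by (simp add: even_positions_before_def odd_positions_before_def sum.distrib)
  also have "\<dots> = (\<Sum>d<length L. L ! d)"
    by (intro sum.cong refl) presburger
  finally show ?thesis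
    by (simp add: sum_list_conv_sum_nth)
qed

lemma odd_cycles_before_length: "odd_cycles_before L (length L) = length (filter odd L)"
  by (simp add: odd_cycles_before_def length_filter_odd_eq_sum_mod sum_list_map_conv_sum_nth)

lemma two_even_positions_eq:
  "2 * even_positions_before L (length L) = sum_list L + length (filter odd L)"
  using even_positions_before_eq[of L "length L"] even_plus_odd_positions[of L]
    odd_cycles_before_length[of L]
  by simp

lemma cyc_position_bounds:
  assumes "c < length L" and "i < L ! c"
  shows "even i \<Longrightarrow> even_positions_before L c + i div 2 + 1 \<le> even_positions_before L (length L)"
    and "odd i \<Longrightarrow> odd_positions_before L c + i div 2 + 1 \<le> odd_positions_before L (length L)"
proof -
  assume "even i"
  then have "i div 2 < (L ! c + 1) div 2"
    using assms(2) by (auto elim!: evenE)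
  moreover have "even_positions_before L c + (L ! c + 1) div 2 \<le> even_positions_before L (length L)"
    using prefix_sum_add_le[OF assms(1)] unfolding even_positions_before_def .
  ultimately show "even_positions_before L c + i div 2 + 1 \<le> even_positions_before L (length L)"
    by linarith
next
  assume "odd i"
  then have "i div 2 < L ! c div 2"
    using assms(2) by (auto elim!: oddE)
  moreover have "odd_positions_before L c + L ! c div 2 \<le> odd_positions_before L (length L)"
    using prefix_sum_add_le[OF assms(1)] unfolding odd_positions_before_def .
  ultimately show "odd_positions_before L c + i div 2 + 1 \<le> odd_positions_before L (length L)"
    by linarith
qed

fun alternating_numbering :: "nat list \<Rightarrow> nat \<times> nat \<Rightarrow> nat" where
  "alternating_numbering L (c, i) =
     (if even i then even_positions_before L c + i div 2 + 1
      else sum_list L - odd_positions_before L c - i div 2)"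

lemma alternating_numbering_range:
  assumes "(c, i) \<in> cyc_verts L"
  shows "even i \<Longrightarrow> 1 \<le> alternating_numbering L (c, i)
                   \<and> alternating_numbering L (c, i) \<le> even_positions_before L (length L)"
    and "odd i \<Longrightarrow> even_positions_before L (length L) < alternating_numbering L (c, i)
                   \<and> alternating_numbering L (c, i) \<le> sum_list L"
  using cyc_position_bounds[of c L i] even_plus_odd_positions[of L] assms
  by (auto simp: cyc_verts_def)

lemma alternating_numbering_inj: "inj_on (alternating_numbering L) (cyc_verts L)"
proof (rule inj_onI, clarify)
  fix c i c' i'
  assume v: "(c, i) \<in> cyc_verts L" and v': "(c', i') \<in> cyc_verts L"
    and eq: "alternating_numbering L (c, i) = alternating_numbering L (c', i')"
  have bounds: "c < length L" "c' < length L" "i < L ! c" "i' < L ! c'"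
    using v v' by (auto simp: cyc_verts_def)
  have "even i \<longleftrightarrow> even i'"
    using alternating_numbering_range[OF v] alternating_numbering_range[OF v'] eq
    by (cases "even i"; cases "even i'") auto
  then consider "even i" "even i'" | "odd i" "odd i'"
    by blast
  then show "c = c' \<and> i = i'"
  proof cases
    case 1
    then have "i div 2 < (L ! c + 1) div 2" "i' div 2 < (L ! c' + 1) div 2"
      using bounds by (auto elim!: evenE)
    moreover have "even_positions_before L c + i div 2 = even_positions_before L c' + i' div 2"
      using eq 1 by simp
    ultimately have "c = c' \<and> i div 2 = i' div 2"
      using prefix_sum_add_inj[where w = "\<lambda>d. (L ! d + 1) div 2"]
      unfolding even_positions_before_def by blast
    then show ?thesis
      using 1 by (auto elim!: evenE)
  next
    case 2
    then have "i div 2 < L ! c div 2" "i' div 2 < L ! c' div 2"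
      using bounds by (auto elim!: oddE)
    moreover have "odd_positions_before L c + i div 2 = odd_positions_before L c' + i' div 2"
      using eq 2 cyc_position_bounds(2)[OF bounds(1,3)] cyc_position_bounds(2)[OF bounds(2,4)]
        even_plus_odd_positions[of L] by simp
    ultimately have "c = c' \<and> i div 2 = i' div 2"
      using prefix_sum_add_inj[where w = "\<lambda>d. L ! d div 2"]
      unfolding odd_positions_before_def by blast
    then show ?thesis
      using 2 by (auto elim!: oddE)
  qed
qed

lemma alternating_numbering_numbering: "alternating_numbering L \<in> numberings (cyc_verts L)"
proof -
  let ?V = "cyc_verts L"
  have "alternating_numbering L ` ?V \<subseteq> {1..sum_list L}"
    using alternating_numbering_range even_plus_odd_positions[of L] by fastforce
  moreover have "card (alternating_numbering L ` ?V) = card {1..sum_list L}"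
    using card_image[OF alternating_numbering_inj] by (simp add: card_cyc_verts)
  ultimately have "alternating_numbering L ` ?V = {1..sum_list L}"
    by (intro card_subset_eq) auto
  then show ?thesis
    using alternating_numbering_inj by (simp add: numberings_def bij_betw_def card_cyc_verts)
qed

lemma alternating_numbering_edge:
  assumes "((c, i), (c', j)) \<in> cyc_edges L"
  shows "alternating_numbering L (c, i) + alternating_numbering L (c', j)
         \<le> max (sum_list L + 2 + odd_cycles_before L c) (2 * even_positions_before L (length L))"
proof -
  have edge: "c' = c" "j = Suc i mod L ! c" "c < length L" "i < L ! c"
    using assms by (auto simp: cyc_edges_def)
  define a where "a = even_positions_before L c"
  define b where "b = odd_positions_before L c"
  define p where "p = sum_list L"
  define e where "e = even_positions_before L (length L)"
  have a_eq: "a = b + odd_cycles_before L c"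
    unfolding a_def b_def by (rule even_positions_before_eq)
  have even_le: "a + k div 2 + 1 \<le> e" if "even k" "k < L ! c" for k
    using cyc_position_bounds(1)[OF edge(3) that(2) that(1)] by (simp add: a_def e_def)
  have odd_le: "b + k div 2 + 1 \<le> p - e" if "odd k" "k < L ! c" for k
    using cyc_position_bounds(2)[OF edge(3) that(2) that(1)] even_plus_odd_positions[of L]
    by (simp add: b_def p_def e_def)
  have label: "alternating_numbering L (c, k) = (if even k then a + k div 2 + 1 else p - b - k div 2)"
    for k by (simp add: a_def b_def p_def)
  show ?thesis
  proof (cases "Suc i = L ! c")
    case True
    then have "j = 0"
      using edge by simp
    show ?thesis
    proof (cases "even i")
      case True
      then show ?thesis
        using even_le[OF True edge(4)] even_le[of 0] edge \<open>j = 0\<close> label[of i] label[of j]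
        unfolding e_def by simp
    next
      case False
      then show ?thesis
        using odd_le[OF False edge(4)] a_eq edge \<open>j = 0\<close> label[of i] label[of j]
        unfolding p_def by simp
    qed
  next
    case False
    then have j: "j = Suc i" "Suc i < L ! c"
      using edge by auto
    show ?thesis
    proof (cases "even i")
      case True
      then show ?thesis
        using odd_le[of "Suc i"] j a_eq edge label[of i] label[of j]
        unfolding p_def by (auto elim!: evenE)
    next
      case False
      then show ?thesis
        using odd_le[OF False edge(4)] j a_eq edge label[of i] label[of j]
        unfolding p_def by (auto elim!: oddE)
    qed
  qed
qed

lemma odd_cycles_before_parity_sorted:
  assumes "sorted (map (\<lambda>l. l mod 2) L)" and "c < length L"
  shows "odd_cycles_before L c + 1 \<le> max 1 (length (filter odd L))"
proof (cases "even (L ! c)")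
  case True
  have "L ! d mod 2 = 0" if "d < c" for d
    using sorted_nth_mono[OF assms(1), of d c] that assms(2) True by simp
  then have "odd_cycles_before L c = 0"
    by (simp add: odd_cycles_before_def)
  then show ?thesis
    by simp
next
  case False
  then have "odd_cycles_before L c + 1 \<le> odd_cycles_before L (length L)"
    using prefix_sum_add_le[OF assms(2), of "\<lambda>d. L ! d mod 2"]
    by (simp add: odd_cycles_before_def odd_iff_mod_2_eq_one)
  then show ?thesis
    by (simp add: odd_cycles_before_length)
qed

theorem str_cycles_parity_sorted:
  assumes "L \<noteq> []" and "\<forall>l \<in> set L. 3 \<le> l" and "sorted (map (\<lambda>l. l mod 2) L)"
  shows "str (cyc_verts L) (cyc_edges L)
         = max (sum_list L + 2) (sum_list L + 1 + length (filter odd L))"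
proof (rule str_eqI[OF finite_cyc_edges cyc_edges_subset _ alternating_numbering_numbering])
  show edges_ne: "cyc_edges L \<noteq> {}"
    using cyc_verts_ne[OF assms(1)] assms(2) by (fastforce simp: cyc_edges_eq_image)
  show "str_f (cyc_edges L) (alternating_numbering L)
        \<le> max (sum_list L + 2) (sum_list L + 1 + length (filter odd L))"
    unfolding str_f_le_iff[OF finite_cyc_edges edges_ne]
  proof clarify
    fix c i c' j assume edge: "((c, i), (c', j)) \<in> cyc_edges L"
    then have "c < length L"
      by (auto simp: cyc_edges_def)
    then have "odd_cycles_before L c + 1 \<le> max 1 (length (filter odd L))"
      by (rule odd_cycles_before_parity_sorted[OF assms(3)])
    then show "alternating_numbering L (c, i) + alternating_numbering L (c', j)
               \<le> max (sum_list L + 2) (sum_list L + 1 + length (filter odd L))"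
      using alternating_numbering_edge[OF edge] two_even_positions_eq[of L]
      by (simp add: max_def split: if_splits)
  qed
qed (use str_f_cyc_lower_bound[OF assms(1,2)] in blast)

theorem mainTheorem13:
  fixes ms ns :: "nat list"
  assumes "length ms + length ns \<ge> 1"
    and "\<forall>m \<in> set ms. m \<ge> 2"
    and "\<forall>n \<in> set ns. n \<ge> 1"
  shows "str (cyc_verts (map (\<lambda>m. 2 * m) ms @ map (\<lambda>n. 2 * n + 1) ns))
             (cyc_edges (map (\<lambda>m. 2 * m) ms @ map (\<lambda>n. 2 * n + 1) ns))
         = max (card (cyc_verts (map (\<lambda>m. 2 * m) ms @ map (\<lambda>n. 2 * n + 1) ns)) + 2)
               (card (cyc_verts (map (\<lambda>m. 2 * m) ms @ map (\<lambda>n. 2 * n + 1) ns)) + 1 + length ns)"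
proof -
  define L where "L = map (\<lambda>m. 2 * m) ms @ map (\<lambda>n. 2 * n + 1) ns"
  have "L \<noteq> []"
    using assms(1) by (auto simp: L_def)
  moreover have "\<forall>l \<in> set L. 3 \<le> l"
    using assms(2,3) by (fastforce simp: L_def)
  moreover have "map (\<lambda>l. l mod 2) L = map (\<lambda>_. 0) ms @ map (\<lambda>_. 1) ns"
    by (simp add: L_def)
  then have "sorted (map (\<lambda>l. l mod 2) L)"
    by (simp add: sorted_append sorted_wrt_map)
  ultimately have "str (cyc_verts L) (cyc_edges L)
      = max (sum_list L + 2) (sum_list L + 1 + length (filter odd L))"
    by (rule str_cycles_parity_sorted)
  moreover have "length (filter odd L) = length ns"
    by (simp add: L_def filter_map o_def)
  ultimately show ?thesis
    by (simp only: L_def[symmetric] card_cyc_verts)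
qed

end
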